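(* For all integers $m\geq 1$ and $q\geq 1$, the graph $m*Q_q$ divides $Q_{mq}$.
   Context: $Q_q$ denotes the $q$-dimensional hypercube graph (vertices are $q$-tuples of $0$'s and $1$'s, adjacent iff they differ in exactly one coordinate). For a graph $G$ and positive integer $m$, the $m$-stretch $m*G$ is the graph obtained from $G$ by replacing each edge by a path of length $m$ (with $m$ edges), these paths being internally vertex-disjoint. For graphs $H$ and $G$, "$H$ divides $G$" means there is a collection of subgraphs $H_i$ of $G$, each isomorphic to $H$, such that $E(G)$ is the disjoint union of the edge sets $E(H_i)$. *)

theory Defs
  imports Main
begin

type_synonym 'a graph = "'a set \<times> 'a set set"

definition verts :: "'a graph \<Rightarrow> 'a set" where "verts G = fst G"
definition edges :: "'a graph \<Rightarrow> 'a set set" where "edges G = snd G"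

definition is_graph :: "'a graph \<Rightarrow> bool" where
  "is_graph G \<longleftrightarrow> (\<forall>e\<in>edges G. e \<subseteq> verts G \<and> card e = 2)"

definition subgraph :: "'a graph \<Rightarrow> 'a graph \<Rightarrow> bool" where
  "subgraph K G \<longleftrightarrow> is_graph K \<and> verts K \<subseteq> verts G \<and> edges K \<subseteq> edges G"

definition graph_iso :: "'b graph \<Rightarrow> 'a graph \<Rightarrow> bool" where
  "graph_iso H K \<longleftrightarrow> (\<exists>f. bij_betw f (verts H) (verts K) \<and>
     (\<forall>u\<in>verts H. \<forall>v\<in>verts H. {u, v} \<in> edges H \<longleftrightarrow> {f u, f v} \<in> edges K))"

definition graph_divides :: "'b graph \<Rightarrow> 'a graph \<Rightarrow> bool" where
  "graph_divides H G \<longleftrightarrow> (\<exists>S. (\<forall>K\<in>S. subgraph K G \<and> graph_iso H K) \<and>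
     (\<Union>K\<in>S. edges K) = edges G \<and>
     (\<forall>K1\<in>S. \<forall>K2\<in>S. K1 \<noteq> K2 \<longrightarrow> edges K1 \<inter> edges K2 = {}))"

definition hypercube :: "nat \<Rightarrow> bool list graph" where
  "hypercube q = ({u. length u = q},
     {{u, v} | u v. length u = q \<and> length v = q \<and> card {i. i < q \<and> u ! i \<noteq> v ! i} = 1})"

text \<open>The m-stretch of G: each edge e = {a,b} (with an arbitrarily chosen orientation (a,b))
  is replaced by the path a = w_0, w_1, ..., w_m = b, where the internal vertices
  w_i = Inr (e, i), 0 < i < m, are new and distinct for distinct edges.\<close>
definition orient :: "'a set \<Rightarrow> 'a \<times> 'a" where
  "orient e = (SOME p. e = {fst p, snd p})"

definition path_vertex :: "nat \<Rightarrow> 'a set \<Rightarrow> nat \<Rightarrow> 'a + ('a set \<times> nat)" where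
  "path_vertex m e i = (if i = 0 then Inl (fst (orient e))
                        else if i = m then Inl (snd (orient e))
                        else Inr (e, i))"

definition stretch :: "nat \<Rightarrow> 'a graph \<Rightarrow> ('a + ('a set \<times> nat)) graph" where
  "stretch m G = (Inl ` verts G \<union> {Inr (e, i) | e i. e \<in> edges G \<and> 0 < i \<and> i < m},
     {{path_vertex m e i, path_vertex m e (Suc i)} | e i. e \<in> edges G \<and> i < m})"

end

(*
  Identify the vertices of Q_(mq) with the subsets of {0..<mq}, cut into q blocks of m
  consecutive positions, and blow up a vertex w of Q_q to the union of the blocks j with w ! j.
  Replacing each edge of Q_q in direction j by the path that switches the positions of block j
  one at a time, and then translating by a set Z (symmetric difference), gives a copy of
  m * Q_q inside Q_(mq).

  The edge {X, X \<union> {jm + t}} of Q_(mq) is the t-th edge of the path in direction j starting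
  at W, both for W = X \<triangle> [jm, jm + t) and for W = X \<triangle> [jm, jm + t], and exactly one of these
  two sets has even size. The decomposition W = Z \<triangle> blowup w becomes unique once Z
  is normalised ("admissible"): Z contains no first position of a block, except that for even
  m position 0 is free. Since the stretch orients its edges arbitrarily, copy Z traverses each
  path from its "canonical" end, the end of even size; for even m both ends are even, and the
  free position 0 of Z decides between them. Hence every edge lies in exactly one copy.
*)

theory Submission
  imports Defs
begin

lemma verts_pair [simp]: "verts (V, E) = V"
  by (simp add: verts_def)

lemma edges_pair [simp]: "edges (V, E) = E"
  by (simp add: edges_def)

lemma card_sym_diff_even_iff:
  assumes "finite A" "finite B"
  shows "even (card (sym_diff A B)) \<longleftrightarrow> (even (card A) \<longleftrightarrow> even (card B))"
proof -
  have "card (sym_diff A B) = card (A - B) + card (B - A)"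
    using assms by (subst card_Un_disjoint) auto
  moreover have "card A = card (A - B) + card (A \<inter> B)" "card B = card (B - A) + card (A \<inter> B)"
    using assms by (metis card_Int_Diff Int_commute add.commute)+
  ultimately have "card (sym_diff A B) + 2 * card (A \<inter> B) = card A + card B"
    by linarith
  then show ?thesis
    by (metis even_add even_mult_iff even_numeral)
qed

definition char_list :: "nat \<Rightarrow> nat set \<Rightarrow> bool list" where
  "char_list n X = map (\<lambda>i. i \<in> X) [0..<n]"

lemma length_char_list [simp]: "length (char_list n X) = n"
  by (simp add: char_list_def)

lemma nth_char_list [simp]: "i < n \<Longrightarrow> char_list n X ! i = (i \<in> X)"
  by (simp add: char_list_def)

lemma char_list_eq_iff:
  assumes "X \<subseteq> {..<n}" "Y \<subseteq> {..<n}"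
  shows "char_list n X = char_list n Y \<longleftrightarrow> X = Y"
proof
  assume "char_list n X = char_list n Y"
  then have "\<forall>i<n. (i \<in> X) = (i \<in> Y)"
    by (metis nth_char_list)
  then show "X = Y"
    using assms by blast
qed simp

lemma char_list_true_positions:
  "length u = n \<Longrightarrow> char_list n {i. i < n \<and> u ! i} = u"
  by (rule nth_equalityI) auto

definition flip :: "bool list \<Rightarrow> nat \<Rightarrow> bool list" where
  "flip u j = u[j := \<not> u ! j]"

lemma length_flip [simp]: "length (flip u j) = length u"
  by (simp add: flip_def)

lemma nth_flip: "j < length u \<Longrightarrow> flip u j ! k = (if k = j then \<not> u ! j else u ! k)"
  by (simp add: flip_def nth_list_update)

lemma flip_flip [simp]: "flip (flip u j) j = u"
  by (cases "j < length u") (simp_all add: flip_def list_update_beyond)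

lemma flip_neq: "j < length u \<Longrightarrow> flip u j \<noteq> u"
  by (metis nth_flip)

lemma flip_char_list: "i < n \<Longrightarrow> flip (char_list n X) i = char_list n (sym_diff X {i})"
  by (rule nth_equalityI) (auto simp: nth_flip)

lemma doubleton_flip_eqI:
  assumes "length x = n" "length y = n" "j < n" "\<forall>k<n. k \<noteq> j \<longrightarrow> x ! k = y ! k"
  shows "{y, flip y j} = {x, flip x j}"
proof (cases "y ! j = x ! j")
  case True
  then have "y = x"
    using assms by (intro nth_equalityI) auto
  then show ?thesis by simp
next
  case False
  then have "y = flip x j"
    using assms by (intro nth_equalityI) (auto simp: nth_flip)
  then show ?thesis by auto
qed

lemma verts_hypercube: "verts (hypercube n) = {u. length u = n}"
  by (simp add: hypercube_def)

lemma hypercube_edgeE: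
  assumes "e \<in> edges (hypercube n)"
  obtains u j where "length u = n" "j < n" "e = {u, flip u j}"
proof -
  obtain u v where e: "e = {u, v}" "length u = n" "length v = n"
    "card {i. i < n \<and> u ! i \<noteq> v ! i} = 1"
    using assms unfolding hypercube_def edges_def by auto
  then obtain j where "{i. i < n \<and> u ! i \<noteq> v ! i} = {j}"
    by (meson card_1_singletonE)
  then have j: "j < n" "u ! j \<noteq> v ! j" and other: "\<And>k. k < n \<Longrightarrow> k \<noteq> j \<Longrightarrow> u ! k = v ! k"
    by blast+
  have "v = flip u j"
    using e j other by (intro nth_equalityI) (auto simp: nth_flip)
  then show ?thesis
    using that e(1,2) j(1) by blast
qed

lemma flip_edge_in_hypercube:
  assumes "length u = n" "j < n"
  shows "{u, flip u j} \<in> edges (hypercube n)"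
proof -
  have "{i. i < n \<and> u ! i \<noteq> flip u j ! i} = {j}"
    using assms by (auto simp: nth_flip)
  then show ?thesis
    using assms unfolding hypercube_def edges_def by force
qed

lemma card_hypercube_edge:
  assumes "e \<in> edges (hypercube n)"
  shows "card e = 2"
proof -
  obtain u j where "length u = n" "j < n" "e = {u, flip u j}"
    using assms by (rule hypercube_edgeE)
  then show ?thesis
    using flip_neq[of j u] by auto
qed

lemma is_graph_hypercube: "is_graph (hypercube n)"
  unfolding is_graph_def
proof
  fix e assume e: "e \<in> edges (hypercube n)"
  then obtain u j where "length u = n" "j < n" "e = {u, flip u j}"
    by (rule hypercube_edgeE)
  then show "e \<subseteq> verts (hypercube n) \<and> card e = 2"
    using card_hypercube_edge[OF e] by (simp add: verts_hypercube)
qed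

lemma char_list_edge_in_hypercube:
  assumes "X \<subseteq> {..<n}" "i < n"
  shows "{char_list n X, char_list n (sym_diff X {i})} \<in> edges (hypercube n)"
  using flip_edge_in_hypercube[of "char_list n X" n i] assms(2)
  unfolding flip_char_list[OF assms(2)] by simp

lemma hypercube_edge_char_listE:
  assumes "e \<in> edges (hypercube n)"
  obtains X i where "X \<subseteq> {..<n}" "i < n" "e = {char_list n X, char_list n (sym_diff X {i})}"
proof -
  obtain u i where u: "length u = n" "i < n" "e = {u, flip u i}"
    using assms by (rule hypercube_edgeE)
  define X where "X = {k. k < n \<and> u ! k}"
  have "u = char_list n X"
    unfolding X_def using u(1) by (rule char_list_true_positions[symmetric])
  then have "e = {char_list n X, char_list n (sym_diff X {i})}"
    using u(2,3) by (simp add: flip_char_list)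
  moreover have "X \<subseteq> {..<n}"
    unfolding X_def by blast
  ultimately show ?thesis
    using that u(2) by blast
qed

lemma orient_doubleton: "orient {x, y} = (x, y) \<or> orient {x, y} = (y, x)"
proof -
  have "{x, y} = {fst (orient {x, y}), snd (orient {x, y})}"
    unfolding orient_def by (rule someI[of _ "(x, y)"]) simp
  then show ?thesis
    by (metis doubleton_eq_iff prod.collapse)
qed

lemma orient_flip_edge:
  obtains a where "orient {u, flip u j} = (a, flip a j)" "a = u \<or> a = flip u j"
proof (cases "orient {u, flip u j} = (u, flip u j)")
  case True
  then show ?thesis
    using that by blast
next
  case False
  then have "orient {u, flip u j} = (flip u j, flip (flip u j) j)"
    using orient_doubleton[of u "flip u j"] by simp
  then show ?thesis
    using that by blast
qed

lemma hypercube_edge_orientE: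
  assumes "e \<in> edges (hypercube n)"
  obtains a j where "orient e = (a, flip a j)" "e = {a, flip a j}" "length a = n" "j < n"
proof -
  obtain u j where u: "length u = n" "j < n" "e = {u, flip u j}"
    using assms by (rule hypercube_edgeE)
  obtain a where a: "orient e = (a, flip a j)" "a = u \<or> a = flip u j"
    unfolding u(3) by (rule orient_flip_edge)
  have "e = {a, flip a j}" "length a = n"
    using a(2) u by auto
  then show ?thesis
    using that a(1) u(2) by blast
qed

definition dir :: "bool list set \<Rightarrow> nat" where
  "dir e = (LEAST k. fst (orient e) ! k \<noteq> snd (orient e) ! k)"

lemma dir_eq: "orient e = (a, flip a j) \<Longrightarrow> j < length a \<Longrightarrow> dir e = j"
  unfolding dir_def by (rule Least_equality) (auto simp: nth_flip split: if_splits)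

lemma verts_stretch:
  "verts (stretch m G) = Inl ` verts G \<union> {Inr (e, i) | e i. e \<in> edges G \<and> 0 < i \<and> i < m}"
  by (simp add: stretch_def)

lemma edges_stretch:
  "edges (stretch m G) = {{path_vertex m e i, path_vertex m e (Suc i)} | e i. e \<in> edges G \<and> i < m}"
  by (simp add: stretch_def)

lemma path_vertex_in_verts:
  assumes "is_graph G" "e \<in> edges G" "i \<le> m"
  shows "path_vertex m e i \<in> verts (stretch m G)"
proof -
  obtain x y where "e = {x, y}"
    using assms(1,2) unfolding is_graph_def by (meson card_2_iff)
  then have "fst (orient e) \<in> verts G \<and> snd (orient e) \<in> verts G"
    using assms(1,2) orient_doubleton[of x y] unfolding is_graph_def by auto
  then show ?thesis
    using assms by (auto simp: path_vertex_def verts_stretch)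
qed

lemma stretch_edge_subset_verts:
  "is_graph G \<Longrightarrow> \<epsilon> \<in> edges (stretch m G) \<Longrightarrow> \<epsilon> \<subseteq> verts (stretch m G)"
  by (auto simp: edges_stretch intro!: path_vertex_in_verts)

lemma graph_iso_image:
  assumes inj: "inj_on g (verts H)" and sub: "\<forall>\<epsilon>\<in>edges H. \<epsilon> \<subseteq> verts H"
  shows "graph_iso H (g ` verts H, (`) g ` edges H)"
  unfolding graph_iso_def
proof (intro exI[of _ g] conjI ballI)
  show "bij_betw g (verts H) (verts (g ` verts H, (`) g ` edges H))"
    using inj by (simp add: inj_on_imp_bij_betw)
  fix u v assume uv: "u \<in> verts H" "v \<in> verts H"
  have image_uv: "g ` {u, v} = {g u, g v}"
    by simp
  have "g ` {u, v} = g ` \<epsilon> \<longleftrightarrow> {u, v} = \<epsilon>" if "\<epsilon> \<in> edges H" for \<epsilon>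
    by (rule inj_on_image_eq_iff[OF inj]) (use uv sub that in auto)
  then show "{u, v} \<in> edges H \<longleftrightarrow> {g u, g v} \<in> edges (g ` verts H, (`) g ` edges H)"
    unfolding image_uv[symmetric] edges_pair by blast
qed

subsection \<open>Blocks and blow-ups\<close>

locale block_cube =
  fixes m q :: nat
  assumes m_pos: "0 < m"
begin

definition block :: "nat \<Rightarrow> nat \<Rightarrow> nat set" where
  "block j t = {j * m..<j * m + t}"

definition blowup :: "bool list \<Rightarrow> nat set" where
  "blowup u = {i. i < m * q \<and> u ! (i div m)}"

lemma mem_block: "i \<in> block j t \<longleftrightarrow> j * m \<le> i \<and> i < j * m + t"
  by (simp add: block_def)

lemma finite_block [simp]: "finite (block j t)"
  by (simp add: block_def)

lemma card_block [simp]: "card (block j t) = t"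
  by (simp add: block_def)

lemma block_0 [simp]: "block j 0 = {}"
  by (simp add: block_def)

lemma block_Suc: "block j (Suc t) = insert (j * m + t) (block j t)"
  by (auto simp: block_def)

lemma div_eq_iff_mem_block: "i div m = j \<longleftrightarrow> i \<in> block j m"
proof -
  have "i div m = j \<longleftrightarrow> j \<le> i div m \<and> i div m < Suc j"
    by auto
  also have "\<dots> \<longleftrightarrow> j * m \<le> i \<and> i < Suc j * m"
    using m_pos by (simp add: less_eq_div_iff_mult_less_eq div_less_iff_less_mult)
  finally show ?thesis
    by (simp add: mem_block add.commute)
qed

lemma block_mono: "t \<le> s \<Longrightarrow> block j t \<subseteq> block j s"
  by (auto simp: block_def)

lemma block_subset: "t \<le> m \<Longrightarrow> j < q \<Longrightarrow> block j t \<subseteq> {..<m * q}"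
proof
  fix i assume "t \<le> m" "j < q" "i \<in> block j t"
  then have "i < Suc j * m"
    by (simp add: mem_block)
  also have "\<dots> \<le> q * m"
    using \<open>j < q\<close> by (intro mult_right_mono) auto
  finally show "i \<in> {..<m * q}"
    by (simp add: mult.commute)
qed

lemma first_mem_block: "0 < t \<Longrightarrow> j * m \<in> block j t"
  by (simp add: mem_block)

lemma last_mem_block: "j * m + m - 1 \<in> block j m"
  using m_pos by (simp add: mem_block)

lemma last_not_mem_block: "t < m \<Longrightarrow> j * m + m - 1 \<notin> block j t"
  unfolding mem_block by linarith

lemma ends_not_mem_other_block:
  assumes "k \<noteq> j" "t \<le> m"
  shows "k * m \<notin> block j t" "k * m + m - 1 \<notin> block j t"
proof -
  have "k * m \<in> block k m" "k * m + m - 1 \<in> block k m"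
    using first_mem_block[OF m_pos] last_mem_block .
  then have "k * m \<notin> block j m" "k * m + m - 1 \<notin> block j m"
    using assms(1) by (metis div_eq_iff_mem_block)+
  then show "k * m \<notin> block j t" "k * m + m - 1 \<notin> block j t"
    using block_mono[OF assms(2)] by blast+
qed

lemma blowup_subset: "blowup u \<subseteq> {..<m * q}"
  by (auto simp: blowup_def)

lemma finite_blowup [simp]: "finite (blowup u)"
  by (simp add: blowup_def)

lemma mem_blowup_block: "i \<in> block k m \<Longrightarrow> k < q \<Longrightarrow> i \<in> blowup u \<longleftrightarrow> u ! k"
  using block_subset[of m k] by (auto simp: blowup_def div_eq_iff_mem_block[symmetric])

lemma blowup_flip:
  assumes "length u = q" "j < q"
  shows "blowup (flip u j) = sym_diff (blowup u) (block j m)"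
proof (rule set_eqI)
  fix i
  show "i \<in> blowup (flip u j) \<longleftrightarrow> i \<in> sym_diff (blowup u) (block j m)"
  proof (cases "i \<in> block j m")
    case True
    then show ?thesis
      using assms mem_blowup_block[OF True] by (simp add: nth_flip)
  next
    case False
    then show ?thesis
      using assms by (auto simp: blowup_def nth_flip div_eq_iff_mem_block)
  qed
qed

lemma blowup_inject:
  assumes "length u = q" "length v = q" "blowup u = blowup v"
  shows "u = v"
proof (rule nth_equalityI)
  fix k assume "k < length u"
  then show "u ! k = v ! k"
    using mem_blowup_block[OF first_mem_block[OF m_pos], of k] assms by metis
qed (use assms in simp)

lemma blowup_eq_Union_blocks:
  assumes "length u = q"
  shows "blowup u = (\<Union>k\<in>{k. k < q \<and> u ! k}. block k m)"
proof -
  have "i div m < q" if "i < m * q" for i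
    using that m_pos by (simp add: div_less_iff_less_mult mult.commute)
  then show ?thesis
    using block_subset[of m] by (auto simp: blowup_def div_eq_iff_mem_block[symmetric])
qed

lemma even_card_blowup:
  assumes "even m" "length u = q"
  shows "even (card (blowup u))"
proof -
  have "card (blowup u) = (\<Sum>k\<in>{k. k < q \<and> u ! k}. card (block k m))"
    unfolding blowup_eq_Union_blocks[OF assms(2)]
    by (rule card_UN_disjoint) (auto simp: div_eq_iff_mem_block[symmetric])
  then show ?thesis
    using assms(1) by (simp add: dvd_sum)
qed

definition mixed :: "nat \<Rightarrow> nat set \<Rightarrow> bool" where
  "mixed k S \<longleftrightarrow> (k * m \<in> S) \<noteq> (k * m + m - 1 \<in> S)"

lemma not_mixed_blowup: "k < q \<Longrightarrow> \<not> mixed k (blowup u)"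
  unfolding mixed_def using mem_blowup_block first_mem_block[OF m_pos] last_mem_block by metis

lemma mixed_partial_block:
  assumes "k < q" "0 < t" "t < m"
  shows "mixed k (sym_diff (blowup u) (block j t)) \<longleftrightarrow> k = j"
proof (cases "k = j")
  case True
  then show ?thesis
    using not_mixed_blowup[OF assms(1), of u] first_mem_block[OF assms(2)]
      last_not_mem_block[OF assms(3)]
    unfolding mixed_def by auto
next
  case False
  then show ?thesis
    using not_mixed_blowup[OF assms(1), of u] ends_not_mem_other_block[OF False] assms(3)
    unfolding mixed_def by auto
qed

subsection \<open>Admissible translations\<close>

definition canonical :: "nat set \<Rightarrow> nat set \<Rightarrow> nat \<Rightarrow> bool" where
  "canonical Z W j \<longleftrightarrow> even (card W) \<and> (even m \<longrightarrow> (j * m \<in> W \<longleftrightarrow> 0 \<in> Z))"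

definition admissible :: "nat set \<Rightarrow> bool" where
  "admissible Z \<longleftrightarrow> Z \<subseteq> {..<m * q} \<and> (\<forall>k<q. (k \<noteq> 0 \<or> odd m) \<longrightarrow> k * m \<notin> Z) \<and>
     (even m \<longrightarrow> even (card Z))"

lemma admissible_subset: "admissible Z \<Longrightarrow> Z \<subseteq> {..<m * q}"
  by (simp add: admissible_def)

lemma finite_admissible: "admissible Z \<Longrightarrow> finite Z"
  using admissible_subset finite_subset by blast

lemma canonical_flip:
  assumes Z: "admissible Z" and a: "length a = q" and j: "j < q"
  shows "canonical Z (sym_diff Z (blowup (flip a j))) j \<longleftrightarrow>
    \<not> canonical Z (sym_diff Z (blowup a)) j"
proof -
  define W where "W = sym_diff Z (blowup a)"
  have finite_W: "finite W"
    using finite_admissible[OF Z] by (simp add: W_def)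
  have flipped: "sym_diff Z (blowup (flip a j)) = sym_diff W (block j m)"
    unfolding W_def blowup_flip[OF a j] by blast
  have parity: "even (card (sym_diff W (block j m))) \<longleftrightarrow> (even (card W) \<longleftrightarrow> even m)"
    using card_sym_diff_even_iff[OF finite_W finite_block] by simp
  show ?thesis
  proof (cases "even m")
    case False
    then show ?thesis
      unfolding flipped W_def[symmetric] canonical_def using parity by simp
  next
    case True
    have "even (card W)"
      using card_sym_diff_even_iff[OF finite_admissible[OF Z] finite_blowup] Z True
        even_card_blowup[OF True a]
      unfolding W_def admissible_def by simp
    moreover have "j * m \<in> block j m"
      using first_mem_block[OF m_pos] .
    ultimately show ?thesis
      unfolding flipped W_def[symmetric] canonical_def using parity True by auto
  qed
qed

lemma admissible_decomposition:
  assumes W: "W \<subseteq> {..<m * q}" "even (card W)" and j: "j < q"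
  obtains Z w where "admissible Z" "length w = q" "W = sym_diff Z (blowup w)" "canonical Z W j"
proof -
  \<comment> \<open>For even m the entry w ! 0 is free; it is chosen to make W canonical.\<close>
  define w where
    "w = map (\<lambda>k. if k = 0 \<and> even m then (0 \<in> W) \<noteq> (j * m \<in> W) else k * m \<in> W) [0..<q]"
  define Z where "Z = sym_diff W (blowup w)"
  have length_w: "length w = q"
    by (simp add: w_def)
  have first_in_blowup: "k * m \<in> blowup w \<longleftrightarrow> w ! k" if "k < q" for k
    using mem_blowup_block[OF first_mem_block[OF m_pos] that] .
  have "k * m \<notin> Z" if "k < q" "k \<noteq> 0 \<or> odd m" for k
    using that first_in_blowup[OF that(1)] unfolding Z_def w_def by auto
  moreover have "even m \<longrightarrow> even (card Z)"
    using card_sym_diff_even_iff[of W "blowup w"] W finite_subset even_card_blowup[OF _ length_w]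
    unfolding Z_def by auto
  moreover have "Z \<subseteq> {..<m * q}"
    using W(1) blowup_subset unfolding Z_def by blast
  ultimately have "admissible Z"
    unfolding admissible_def by blast
  moreover have "canonical Z W j"
  proof -
    have "0 < q"
      using j by simp
    then have "even m \<Longrightarrow> w ! 0 = ((0 \<in> W) \<noteq> (j * m \<in> W))" "0 \<in> blowup w \<longleftrightarrow> w ! 0"
      using first_in_blowup[of 0] by (simp_all add: w_def)
    then have "even m \<longrightarrow> (0 \<in> Z \<longleftrightarrow> j * m \<in> W)"
      unfolding Z_def by auto
    then show ?thesis
      using W(2) unfolding canonical_def by auto
  qed
  moreover have "W = sym_diff Z (blowup w)"
    unfolding Z_def by blast
  ultimately show ?thesis
    using that length_w by blast
qed

lemma admissible_decomposition_unique:
  assumes Z: "admissible Z" "admissible Z'" and w: "length w = q" "length w' = q"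
    and eq: "sym_diff Z (blowup w) = sym_diff Z' (blowup w')"
    and canonical: "canonical Z (sym_diff Z (blowup w)) j" "canonical Z' (sym_diff Z' (blowup w')) j"
  shows "Z = Z'"
proof -
  have "w = w'"
  proof (rule nth_equalityI)
    fix k assume "k < length w"
    then have k: "k < q"
      using w by simp
    have "k * m \<in> Z \<longleftrightarrow> k * m \<in> Z'"
    proof (cases "k \<noteq> 0 \<or> odd m")
      case True
      then show ?thesis
        using Z k unfolding admissible_def by blast
    next
      case False
      then show ?thesis
        using canonical eq unfolding canonical_def by simp
    qed
    moreover have "k * m \<in> sym_diff Z (blowup w) \<longleftrightarrow> k * m \<in> sym_diff Z' (blowup w')"
      using eq by simp
    ultimately show "w ! k = w' ! k"
      using mem_blowup_block[OF first_mem_block[OF m_pos] k] by blast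
  qed (use w in simp)
  then show ?thesis
    using eq by blast
qed

abbreviation stretched_cube :: "(bool list + bool list set \<times> nat) graph" where
  "stretched_cube \<equiv> stretch m (hypercube q)"

definition path_pos :: "nat set \<Rightarrow> bool list \<Rightarrow> nat \<Rightarrow> nat \<Rightarrow> nat set" where
  "path_pos Z a j i =
     (if canonical Z (sym_diff Z (blowup a)) j then sym_diff (blowup a) (block j i)
      else sym_diff (blowup (flip a j)) (block j (m - i)))"

definition vertex_pos :: "nat set \<Rightarrow> bool list + bool list set \<times> nat \<Rightarrow> nat set" where
  "vertex_pos Z x = (case x of Inl v \<Rightarrow> blowup v | Inr (e, i) \<Rightarrow> path_pos Z (fst (orient e)) (dir e) i)"

definition embed :: "nat set \<Rightarrow> bool list + bool list set \<times> nat \<Rightarrow> bool list" where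
  "embed Z x = char_list (m * q) (sym_diff Z (vertex_pos Z x))"

lemma vertex_pos_path_vertex:
  assumes e: "orient e = (a, flip a j)" and a: "length a = q" and j: "j < q" and i: "i \<le> m"
  shows "vertex_pos Z (path_vertex m e i) = path_pos Z a j i"
proof -
  have flip: "blowup (flip a j) = sym_diff (blowup a) (block j m)"
    using blowup_flip[OF a j] .
  consider "i = 0" | "i = m" | "0 < i" "i < m"
    using i m_pos by linarith
  then show ?thesis
  proof cases
    case 1
    then show ?thesis
      using e flip by (auto simp: path_vertex_def vertex_pos_def path_pos_def)
  next
    case 2
    then show ?thesis
      using e flip m_pos by (auto simp: path_vertex_def vertex_pos_def path_pos_def)
  next
    case 3
    then show ?thesis
      using e dir_eq[OF e] a j by (simp add: path_vertex_def vertex_pos_def)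
  qed
qed

lemma path_pos_subset: "j < q \<Longrightarrow> i \<le> m \<Longrightarrow> path_pos Z a j i \<subseteq> {..<m * q}"
  unfolding path_pos_def using blowup_subset block_subset[of i j] block_subset[of "m - i" j] by auto

lemma mixed_path_pos:
  assumes "0 < i" "i < m" "k < q"
  shows "mixed k (path_pos Z a j i) \<longleftrightarrow> k = j"
  unfolding path_pos_def using mixed_partial_block[OF \<open>k < q\<close>] assms(1,2) by auto

lemma path_pos_outside_block:
  assumes a: "length a = q" and "j < q" "i \<le> m" and k: "k < q" "k \<noteq> j"
  shows "k * m \<in> path_pos Z a j i \<longleftrightarrow> a ! k"
proof -
  have "k * m \<notin> block j i" "k * m \<notin> block j (m - i)"
    using ends_not_mem_other_block[OF k(2)] \<open>i \<le> m\<close> by auto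
  moreover have "flip a j ! k = a ! k"
    using a \<open>j < q\<close> k by (simp add: nth_flip)
  ultimately show ?thesis
    unfolding path_pos_def using mem_blowup_block[OF first_mem_block[OF m_pos] k(1)] by auto
qed

lemma path_pos_index_inject:
  assumes "path_pos Z a j i = path_pos Z a j i'" "i \<le> m" "i' \<le> m"
  shows "i = i'"
proof (cases "canonical Z (sym_diff Z (blowup a)) j")
  case True
  then have "block j i = block j i'"
    using assms(1) unfolding path_pos_def by auto
  then show ?thesis
    by (metis card_block)
next
  case False
  then have "block j (m - i) = block j (m - i')"
    using assms(1) unfolding path_pos_def by auto
  then show ?thesis
    using assms(2,3) by (metis card_block diff_diff_cancel)
qed

lemma inner_vertexE:
  assumes "Inr p \<in> verts stretched_cube"
  obtains e i a j where "p = (e, i)" "orient e = (a, flip a j)" "e = {a, flip a j}"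
    "length a = q" "j < q" "0 < i" "i < m" "vertex_pos Z (Inr p) = path_pos Z a j i"
proof -
  obtain e i where p: "p = (e, i)" "e \<in> edges (hypercube q)" "0 < i" "i < m"
    using assms by (auto simp: verts_stretch)
  obtain a j where e: "orient e = (a, flip a j)" "e = {a, flip a j}" "length a = q" "j < q"
    using p(2) by (rule hypercube_edge_orientE)
  have "vertex_pos Z (Inr p) = path_pos Z a j i"
    using vertex_pos_path_vertex[OF e(1,3,4), of i Z] p by (simp add: path_vertex_def)
  then show ?thesis
    using that p e by blast
qed

lemma vertex_pos_Inl_neq_Inr:
  assumes "length v = q" "Inr p \<in> verts stretched_cube"
  shows "vertex_pos Z (Inl v) \<noteq> vertex_pos Z (Inr p)"
proof -
  obtain e i a j where "length a = q" "j < q" "0 < i" "i < m" "vertex_pos Z (Inr p) = path_pos Z a j i"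
    using assms(2) by (rule inner_vertexE)
  then have "mixed j (vertex_pos Z (Inr p))"
    using mixed_path_pos by simp
  moreover have "\<not> mixed j (vertex_pos Z (Inl v))"
    using not_mixed_blowup \<open>j < q\<close> by (simp add: vertex_pos_def)
  ultimately show ?thesis
    by metis
qed

lemma vertex_pos_Inr_inject:
  assumes x: "Inr p \<in> verts stretched_cube" and y: "Inr p' \<in> verts stretched_cube"
    and eq: "vertex_pos Z (Inr p) = vertex_pos Z (Inr p')"
  shows "p = p'"
proof -
  obtain e i a j where p: "p = (e, i)" "orient e = (a, flip a j)" "e = {a, flip a j}"
    "length a = q" "j < q" "0 < i" "i < m" "vertex_pos Z (Inr p) = path_pos Z a j i"
    using x by (rule inner_vertexE)
  obtain e' i' a' j' where p': "p' = (e', i')" "orient e' = (a', flip a' j')" "e' = {a', flip a' j'}"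
    "length a' = q" "j' < q" "0 < i'" "i' < m" "vertex_pos Z (Inr p') = path_pos Z a' j' i'"
    using y by (rule inner_vertexE)
  have same_pos: "path_pos Z a j i = path_pos Z a' j' i'"
    using eq p(8) p'(8) by simp
  have "mixed j (path_pos Z a' j' i')"
    using mixed_path_pos[OF p(6,7,5), where Z = Z and a = a and j = j] same_pos by simp
  then have "j = j'"
    using mixed_path_pos[OF p'(6,7) p(5), where Z = Z and a = a' and j = j'] by simp
  have "\<forall>k<q. k \<noteq> j \<longrightarrow> a ! k = a' ! k"
  proof (intro allI impI)
    fix k assume "k < q" "k \<noteq> j"
    then show "a ! k = a' ! k"
      using path_pos_outside_block[OF p(4,5), of i k Z] path_pos_outside_block[OF p'(4,5), of i' k Z]
        same_pos \<open>j = j'\<close> p(7) p'(7) by simp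
  qed
  then have "e = e'"
    using doubleton_flip_eqI[OF p(4) p'(4) p(5)] p(3) p'(3) \<open>j = j'\<close> by simp
  then have "a = a'"
    using p(2) p'(2) by simp
  then have "i = i'"
    using path_pos_index_inject same_pos \<open>j = j'\<close> p(7) p'(7) by simp
  then show ?thesis
    using p(1) p'(1) \<open>e = e'\<close> by simp
qed

lemma inj_on_vertex_pos: "inj_on (vertex_pos Z) (verts stretched_cube)"
proof (rule inj_onI)
  fix x y assume x: "x \<in> verts stretched_cube" and y: "y \<in> verts stretched_cube"
    and eq: "vertex_pos Z x = vertex_pos Z y"
  show "x = y"
  proof (cases x; cases y)
    fix v v' assume "x = Inl v" "y = Inl v'"
    then show "x = y"
      using x y eq blowup_inject by (auto simp: verts_stretch verts_hypercube vertex_pos_def)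
  next
    fix v p assume "x = Inl v" "y = Inr p"
    then show "x = y"
      using x y eq vertex_pos_Inl_neq_Inr by (auto simp: verts_stretch verts_hypercube)
  next
    fix p v assume "x = Inr p" "y = Inl v"
    then show "x = y"
      using x y eq vertex_pos_Inl_neq_Inr by (fastforce simp: verts_stretch verts_hypercube)
  next
    fix p p' assume "x = Inr p" "y = Inr p'"
    then show "x = y"
      using x y eq vertex_pos_Inr_inject by simp
  qed
qed

lemma vertex_pos_subset:
  assumes "x \<in> verts stretched_cube"
  shows "vertex_pos Z x \<subseteq> {..<m * q}"
proof (cases x)
  case (Inl v)
  then show ?thesis
    by (simp add: vertex_pos_def blowup_subset)
next
  case (Inr p)
  with assms have "Inr p \<in> verts stretched_cube"
    by simp
  then obtain e i a j where "p = (e, i)" "orient e = (a, flip a j)" "e = {a, flip a j}"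
    "length a = q" "j < q" "0 < i" "i < m" "vertex_pos Z (Inr p) = path_pos Z a j i"
    by (rule inner_vertexE)
  then show ?thesis
    using Inr path_pos_subset[of j i Z a] by simp
qed

lemma inj_on_embed:
  assumes "Z \<subseteq> {..<m * q}"
  shows "inj_on (embed Z) (verts stretched_cube)"
proof (rule inj_onI)
  fix x y assume x: "x \<in> verts stretched_cube" and y: "y \<in> verts stretched_cube"
    and "embed Z x = embed Z y"
  moreover have "sym_diff Z (vertex_pos Z x) \<subseteq> {..<m * q}" "sym_diff Z (vertex_pos Z y) \<subseteq> {..<m * q}"
    using assms vertex_pos_subset[OF x, of Z] vertex_pos_subset[OF y, of Z] by auto
  ultimately have "sym_diff Z (vertex_pos Z x) = sym_diff Z (vertex_pos Z y)"
    unfolding embed_def by (simp add: char_list_eq_iff)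
  then have "vertex_pos Z x = vertex_pos Z y"
    by blast
  then show "x = y"
    using inj_onD[OF inj_on_vertex_pos] x y by blast
qed

subsection \<open>The edge decomposition\<close>

definition block_edge :: "nat set \<Rightarrow> nat \<Rightarrow> nat \<Rightarrow> bool list set" where
  "block_edge W j t =
     {char_list (m * q) (sym_diff W (block j t)), char_list (m * q) (sym_diff W (block j (Suc t)))}"

lemma block_position_less: "j < q \<Longrightarrow> t < m \<Longrightarrow> j * m + t < m * q"
  using block_subset[of "Suc t" j] block_Suc[of j t] by auto

lemma block_edge_eq:
  "block_edge W j t = {char_list (m * q) (sym_diff W (block j t)),
     char_list (m * q) (sym_diff (sym_diff W (block j t)) {j * m + t})}"
proof -
  have "j * m + t \<notin> block j t"
    by (simp add: mem_block)
  then have "sym_diff W (block j (Suc t)) = sym_diff (sym_diff W (block j t)) {j * m + t}"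
    unfolding block_Suc by blast
  then show ?thesis
    by (simp add: block_edge_def)
qed

lemma block_edge_in_hypercube:
  assumes "W \<subseteq> {..<m * q}" "j < q" "t < m"
  shows "block_edge W j t \<in> edges (hypercube (m * q))"
  unfolding block_edge_eq
  by (rule char_list_edge_in_hypercube)
    (use assms block_subset[of t j] block_position_less in auto)

lemma hypercube_edge_block_edgeE:
  assumes "\<epsilon> \<in> edges (hypercube (m * q))"
  obtains W j t where "W \<subseteq> {..<m * q}" "even (card W)" "j < q" "t < m" "\<epsilon> = block_edge W j t"
proof -
  obtain X i where X: "X \<subseteq> {..<m * q}" "i < m * q"
    and \<epsilon>: "\<epsilon> = {char_list (m * q) X, char_list (m * q) (sym_diff X {i})}"
    using assms by (rule hypercube_edge_char_listE)
  define j where "j = i div m"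
  define t where "t = i mod m"
  have i: "i = j * m + t"
    by (simp add: j_def t_def)
  have j: "j < q" and t: "t < m"
    using X(2) m_pos by (simp_all add: j_def t_def div_less_iff_less_mult mult.commute)
  define W where "W = sym_diff X (block j t)"
  have W: "W \<subseteq> {..<m * q}" "finite W"
    using X(1) block_subset[of t j] t j finite_subset by (auto simp: W_def)
  have X_eq: "sym_diff W (block j t) = X"
    by (auto simp: W_def)
  show ?thesis
  proof (cases "even (card W)")
    case True
    have "\<epsilon> = block_edge W j t"
      unfolding block_edge_eq X_eq \<epsilon> i ..
    then show ?thesis
      using that W(1) True j t by blast
  next
    case False
    let ?W' = "sym_diff W {i}"
    have "even (card ?W')"
      using card_sym_diff_even_iff[OF W(2), of "{i}"] False by simp
    moreover have "?W' \<subseteq> {..<m * q}"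
      using W(1) X(2) by auto
    moreover have "sym_diff ?W' (block j t) = sym_diff X {i}"
      "sym_diff (sym_diff X {i}) {i} = X"
      using X_eq by auto
    then have "\<epsilon> = block_edge ?W' j t"
      unfolding block_edge_eq \<epsilon> i by (simp add: insert_commute)
    ultimately show ?thesis
      using that j t by blast
  qed
qed

lemma block_edge_inject:
  assumes W: "W \<subseteq> {..<m * q}" "even (card W)" "j < q" "t < m"
    and W': "W' \<subseteq> {..<m * q}" "even (card W')" "j' < q" "t' < m"
    and eq: "block_edge W j t = block_edge W' j' t'"
  shows "W = W' \<and> j = j'"
proof -
  let ?X = "sym_diff W (block j t)" and ?i = "j * m + t"
  let ?X' = "sym_diff W' (block j' t')" and ?i' = "j' * m + t'"
  have sub: "?X \<subseteq> {..<m * q}" "sym_diff ?X {?i} \<subseteq> {..<m * q}"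
    "?X' \<subseteq> {..<m * q}" "sym_diff ?X' {?i'} \<subseteq> {..<m * q}"
    using W W' block_subset[of t j] block_subset[of t' j'] block_position_less by auto
  have "{char_list (m * q) ?X, char_list (m * q) (sym_diff ?X {?i})} =
      {char_list (m * q) ?X', char_list (m * q) (sym_diff ?X' {?i'})}"
    using eq unfolding block_edge_eq .
  then have "?X = ?X' \<and> sym_diff ?X {?i} = sym_diff ?X' {?i'} \<or>
      ?X = sym_diff ?X' {?i'} \<and> sym_diff ?X {?i} = ?X'"
    using sub by (auto simp: doubleton_eq_iff char_list_eq_iff)
  then have "?i = ?i'" and X: "?X = ?X' \<or> ?X = sym_diff ?X' {?i'}"
    by blast+
  moreover have "?i div m = j" "?i' div m = j'"
    using W(4) W'(4) m_pos by simp_all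
  ultimately have "j = j'" "t = t'"
    by simp_all
  have "finite W'"
    using W'(1) finite_subset by blast
  then have "W \<noteq> sym_diff W' {?i'}"
    using card_sym_diff_even_iff[of W' "{?i'}"] W(2) W'(2) by auto
  then show ?thesis
    using X \<open>j = j'\<close> \<open>t = t'\<close> by blast
qed

lemma embed_stretch_edge:
  assumes e: "orient e = (a, flip a j)" and a: "length a = q" and j: "j < q" and i: "i < m"
  shows "embed Z ` {path_vertex m e i, path_vertex m e (Suc i)} =
    (if canonical Z (sym_diff Z (blowup a)) j then block_edge (sym_diff Z (blowup a)) j i
     else block_edge (sym_diff Z (blowup (flip a j))) j (m - Suc i))"
proof -
  have "m - i = Suc (m - Suc i)"
    using i by simp
  moreover have "sym_diff Z (sym_diff A B) = sym_diff (sym_diff Z A) B" for A B :: "nat set"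
    by blast
  ultimately show ?thesis
    using vertex_pos_path_vertex[OF e a j, of i Z] vertex_pos_path_vertex[OF e a j, of "Suc i" Z] i
    by (simp add: embed_def path_pos_def block_edge_def insert_commute)
qed

definition copy :: "nat set \<Rightarrow> bool list graph" where
  "copy Z = (embed Z ` verts stretched_cube, (`) (embed Z) ` edges stretched_cube)"

lemma copy_edgeE:
  assumes Z: "admissible Z" and \<epsilon>: "\<epsilon> \<in> edges (copy Z)"
  obtains w j t where "length w = q" "j < q" "t < m" "canonical Z (sym_diff Z (blowup w)) j"
    "\<epsilon> = block_edge (sym_diff Z (blowup w)) j t"
proof -
  obtain e i where e: "e \<in> edges (hypercube q)" "i < m"
    and \<epsilon>_eq: "\<epsilon> = embed Z ` {path_vertex m e i, path_vertex m e (Suc i)}"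
    using \<epsilon> by (auto simp: copy_def edges_stretch)
  obtain a j where a: "orient e = (a, flip a j)" "length a = q" "j < q"
    using e(1) by (rule hypercube_edge_orientE)
  note \<epsilon>_eq = \<epsilon>_eq[unfolded embed_stretch_edge[OF a e(2)]]
  show ?thesis
  proof (cases "canonical Z (sym_diff Z (blowup a)) j")
    case True
    then show ?thesis
      using that[of a j i] \<epsilon>_eq a e(2) by simp
  next
    case False
    then show ?thesis
      using that[of "flip a j" j "m - Suc i"] \<epsilon>_eq a e(2) canonical_flip[OF Z a(2,3)] by simp
  qed
qed

lemma block_edge_in_copy:
  assumes Z: "admissible Z" and w: "length w = q" "j < q" "t < m"
    and canonical: "canonical Z (sym_diff Z (blowup w)) j"
  shows "block_edge (sym_diff Z (blowup w)) j t \<in> edges (copy Z)"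
proof -
  define e where "e = {w, flip w j}"
  have e_edge: "e \<in> edges (hypercube q)"
    unfolding e_def using w(1,2) by (rule flip_edge_in_hypercube)
  obtain a where a: "orient e = (a, flip a j)" "a = w \<or> a = flip w j"
    unfolding e_def by (rule orient_flip_edge)
  have "\<exists>i<m. block_edge (sym_diff Z (blowup w)) j t =
      embed Z ` {path_vertex m e i, path_vertex m e (Suc i)}"
  proof (cases "a = w")
    case True
    then show ?thesis
      using embed_stretch_edge[OF a(1) _ w(2,3), of Z] w canonical by auto
  next
    case False
    then have "a = flip w j" "flip a j = w"
      using a(2) by auto
    moreover have "\<not> canonical Z (sym_diff Z (blowup a)) j"
      using canonical_flip[OF Z _ w(2), of a] canonical w(1) \<open>flip a j = w\<close> \<open>a = flip w j\<close> by simp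
    moreover have "m - Suc (m - Suc t) = t" "m - Suc t < m"
      using w(3) by auto
    ultimately show ?thesis
      using embed_stretch_edge[OF a(1) _ w(2), of "m - Suc t" Z] w(1) by auto
  qed
  then obtain i where i: "i < m"
    "block_edge (sym_diff Z (blowup w)) j t = embed Z ` {path_vertex m e i, path_vertex m e (Suc i)}"
    by blast
  moreover have "{path_vertex m e i, path_vertex m e (Suc i)} \<in> edges stretched_cube"
    using e_edge i(1) by (auto simp: edges_stretch)
  ultimately show ?thesis
    unfolding copy_def edges_pair by blast
qed

lemma copy_subgraph:
  assumes Z: "admissible Z"
  shows "subgraph (copy Z) (hypercube (m * q))"
proof -
  have edges_sub: "edges (copy Z) \<subseteq> edges (hypercube (m * q))"
  proof
    fix \<epsilon> assume "\<epsilon> \<in> edges (copy Z)"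
    then obtain w j t where "j < q" "t < m" "\<epsilon> = block_edge (sym_diff Z (blowup w)) j t"
      using Z by (elim copy_edgeE)
    moreover have "sym_diff Z (blowup w) \<subseteq> {..<m * q}"
      using admissible_subset[OF Z] blowup_subset by blast
    ultimately show "\<epsilon> \<in> edges (hypercube (m * q))"
      using block_edge_in_hypercube by simp
  qed
  have "\<epsilon> \<subseteq> verts (copy Z)" if "\<epsilon> \<in> edges (copy Z)" for \<epsilon>
    using that stretch_edge_subset_verts[OF is_graph_hypercube] unfolding copy_def by fastforce
  moreover have "verts (copy Z) \<subseteq> verts (hypercube (m * q))"
    by (auto simp: copy_def embed_def verts_hypercube)
  ultimately show ?thesis
    using edges_sub card_hypercube_edge unfolding subgraph_def is_graph_def by blast
qed

lemma copy_iso: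
  assumes "Z \<subseteq> {..<m * q}"
  shows "graph_iso stretched_cube (copy Z)"
  unfolding copy_def
proof (rule graph_iso_image)
  show "inj_on (embed Z) (verts stretched_cube)"
    using assms by (rule inj_on_embed)
  show "\<forall>\<epsilon>\<in>edges stretched_cube. \<epsilon> \<subseteq> verts stretched_cube"
    using stretch_edge_subset_verts[OF is_graph_hypercube] by blast
qed

lemma hypercube_edge_in_copy:
  assumes "\<epsilon> \<in> edges (hypercube (m * q))"
  obtains Z where "admissible Z" "\<epsilon> \<in> edges (copy Z)"
proof -
  obtain W j t where W: "W \<subseteq> {..<m * q}" "even (card W)" "j < q" "t < m" "\<epsilon> = block_edge W j t"
    using assms by (rule hypercube_edge_block_edgeE)
  obtain Z w where Z: "admissible Z" "length w = q" "W = sym_diff Z (blowup w)" "canonical Z W j"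
    using W(1-3) by (rule admissible_decomposition)
  have "\<epsilon> \<in> edges (copy Z)"
    using block_edge_in_copy[OF Z(1,2) W(3,4)] Z(4) W(5) unfolding Z(3) by simp
  then show ?thesis
    using that Z(1) by blast
qed

lemma admissible_eq_if_common_edge:
  assumes Z: "admissible Z" "admissible Z'" and \<epsilon>: "\<epsilon> \<in> edges (copy Z)" "\<epsilon> \<in> edges (copy Z')"
  shows "Z = Z'"
proof -
  obtain w j t where w: "length w = q" "j < q" "t < m"
    and canonical: "canonical Z (sym_diff Z (blowup w)) j"
    and \<epsilon>_eq: "\<epsilon> = block_edge (sym_diff Z (blowup w)) j t"
    using Z(1) \<epsilon>(1) by (rule copy_edgeE)
  obtain w' j' t' where w': "length w' = q" "j' < q" "t' < m"
    and canonical': "canonical Z' (sym_diff Z' (blowup w')) j'"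
    and \<epsilon>_eq': "\<epsilon> = block_edge (sym_diff Z' (blowup w')) j' t'"
    using Z(2) \<epsilon>(2) by (rule copy_edgeE)
  have sub: "sym_diff Z (blowup w) \<subseteq> {..<m * q}" "sym_diff Z' (blowup w') \<subseteq> {..<m * q}"
    using admissible_subset[OF Z(1)] admissible_subset[OF Z(2)] blowup_subset by auto
  have even: "even (card (sym_diff Z (blowup w)))" "even (card (sym_diff Z' (blowup w')))"
    using canonical canonical' by (simp_all add: canonical_def)
  have "sym_diff Z (blowup w) = sym_diff Z' (blowup w') \<and> j = j'"
    using block_edge_inject[OF sub(1) even(1) w(2,3) sub(2) even(2) w'(2,3)] \<epsilon>_eq \<epsilon>_eq' by simp
  then show ?thesis
    using admissible_decomposition_unique[OF Z w(1) w'(1) _ canonical] canonical' by simp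
qed

end

theorem theorem2:
  fixes m q :: nat
  assumes "m \<ge> 1" and "q \<ge> 1"
  shows "graph_divides (stretch m (hypercube q)) (hypercube (m * q))"
proof -
  interpret block_cube m q
    using assms(1) by unfold_locales simp
  let ?copies = "copy ` {Z. admissible Z}"
  have "\<forall>K\<in>?copies. subgraph K (hypercube (m * q)) \<and> graph_iso (stretch m (hypercube q)) K"
    using copy_subgraph copy_iso admissible_subset by blast
  moreover have "(\<Union>K\<in>?copies. edges K) = edges (hypercube (m * q))"
  proof
    show "(\<Union>K\<in>?copies. edges K) \<subseteq> edges (hypercube (m * q))"
      using copy_subgraph by (auto simp: subgraph_def)
  next
    show "edges (hypercube (m * q)) \<subseteq> (\<Union>K\<in>?copies. edges K)"
    proof
      fix \<epsilon> assume "\<epsilon> \<in> edges (hypercube (m * q))"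
      then obtain Z where "admissible Z" "\<epsilon> \<in> edges (copy Z)"
        by (rule hypercube_edge_in_copy)
      then show "\<epsilon> \<in> (\<Union>K\<in>?copies. edges K)"
        by blast
    qed
  qed
  moreover have "\<forall>K1\<in>?copies. \<forall>K2\<in>?copies. K1 \<noteq> K2 \<longrightarrow> edges K1 \<inter> edges K2 = {}"
    using admissible_eq_if_common_edge by (simp add: disjoint_iff) metis
  ultimately show ?thesis
    unfolding graph_divides_def by blast
qed

end
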